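(* Writing $\mathrm{m}_{\mathbb{D},h}(x+1)=\frac{1}{\pi}\int_{\mathbb{D}}\log^h|x+1|\,dA(x)$, one has $\mathrm{m}_{\mathbb{D},1}(x+1)=0$, $\mathrm{m}_{\mathbb{D},2}(x+1)=\frac{\zeta(2)-1}{2}$, $\mathrm{m}_{\mathbb{D},3}(x+1)=-\frac{3(\zeta(3)-1)}{2}$, $\mathrm{m}_{\mathbb{D},4}(x+1)=\frac{3(19\zeta(4)-4\zeta(2)-12)}{8}$, and $\mathrm{m}_{\mathbb{D},5}(x+1)=-\frac{15(3\zeta(5)+\zeta(3)\zeta(2)-\zeta(3)-\zeta(2)-2)}{2}$.
   Context: $\mathbb{D}=\{x\in\mathbb{C}:|x|\le 1\}$ and $dA$ is Lebesgue (area) measure on $\mathbb{C}$; $\zeta$ is the Riemann zeta function. *)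

theory Defs
  imports "HOL-Analysis.Analysis"
begin

definition zeta :: "nat \<Rightarrow> real" where
  "zeta k = (\<Sum>n. 1 / (real (Suc n)) ^ k)"

definition mD :: "nat \<Rightarrow> real" where
  "mD h = (1 / pi) * (LINT x : cball (0::complex) 1 | lborel. (ln (cmod (x + 1))) ^ h)"

end

theory Submission
  imports Defs "HOL-Probability.Probability" "HOL-Complex_Analysis.Complex_Analysis"
begin

text \<open>
  For \<open>s > -2\<close> the disc integral \<open>(1/\<pi>) \<integral>\<^sub>D |x + 1|\<^sup>s dA\<close> equals \<open>H(s) = \<Gamma>(s + 2) / \<Gamma>(s/2 + 2)\<^sup>2\<close>:
  in the coordinates \<open>x + 1 = a (1 + i c)\<close> it factors into an elementary integral in \<open>a\<close> and the
  Beta-type integral \<open>\<integral> (1 + c\<^sup>2)\<^sup>-\<^sup>q dc\<close>, and Legendre's duplication formula simplifies the resulting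
  Gamma quotient. Expanding \<open>|x + 1|\<^sup>t = exp (t log |x + 1|)\<close> under the integral (dominated convergence)
  identifies \<open>m\<^sub>D\<^sub>,\<^sub>h(x + 1)\<close> with the \<open>h\<close>-th derivative of \<open>H\<close> at \<open>0\<close>. The derivatives of \<open>log H\<close> at \<open>0\<close>
  are \<open>(1 - 2\<^sup>-\<^sup>k) \<psi>\<^sup>(\<^sup>k\<^sup>)(2)\<close>, rational multiples of \<open>\<zeta>(k + 1) - 1\<close>, and the derivatives of \<open>H\<close> are their
  complete Bell polynomials. The stated form of the fourth value also uses \<open>\<zeta>(2)\<^sup>2 = 5 \<zeta>(4) / 2\<close>;
  here \<open>\<zeta>(4) = \<pi>\<^sup>4 / 90\<close> comes from \<open>\<psi>\<^sup>(\<^sup>3\<^sup>)(1/2) = \<pi>\<^sup>4\<close>, the third derivative of the reflection formula.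
\<close>

section \<open>The disc integral of \<open>|x + 1|\<^sup>s\<close>\<close>

lemma borel_measurable_Complex [measurable]:
  assumes [measurable]: "f \<in> borel_measurable M" "g \<in> borel_measurable M"
  shows "(\<lambda>x. Complex (f x) (g x)) \<in> borel_measurable M"
proof -
  have "(\<lambda>x. Complex (f x) (g x)) = (\<lambda>x. complex_of_real (f x) + \<i> * complex_of_real (g x))"
    by (auto simp: complex_eq_iff)
  then show ?thesis by simp
qed

lemma lborel_complex_eq_distr_Complex:
  "distr (lborel \<Otimes>\<^sub>M lborel) borel (\<lambda>p. Complex (fst p) (snd p)) = (lborel :: complex measure)"
proof (rule lborel_eqI[symmetric])
  fix l u :: complex
  assume le: "\<And>b. b \<in> Basis \<Longrightarrow> l \<bullet> b \<le> u \<bullet> b"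
  have pre: "(\<lambda>p. Complex (fst p) (snd p)) -` box l u \<inter> space (lborel \<Otimes>\<^sub>M lborel)
      = {Re l<..<Re u} \<times> {Im l<..<Im u}"
    by (auto simp: box_def Basis_complex_def inner_complex_def space_pair_measure)
  have "Re l \<le> Re u" "Im l \<le> Im u" using le[of 1] le[of \<i>]
    by (auto simp: Basis_complex_def inner_complex_def)
  then show "emeasure (distr (lborel \<Otimes>\<^sub>M lborel) borel (\<lambda>p. Complex (fst p) (snd p))) (box l u)
      = (\<Prod>b\<in>Basis. (u - l) \<bullet> b)"
    by (simp add: emeasure_distr pre lborel.emeasure_pair_measure_Times Basis_complex_def
        inner_complex_def ennreal_mult')
qed simp

lemma nn_integral_lborel_complex:
  fixes F :: "complex \<Rightarrow> ennreal"
  assumes [measurable]: "F \<in> borel_measurable borel"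
  shows "(\<integral>\<^sup>+z. F z \<partial>lborel) = (\<integral>\<^sup>+a. \<integral>\<^sup>+b. F (Complex a b) \<partial>lborel \<partial>lborel)"
proof -
  have "(\<integral>\<^sup>+z. F z \<partial>lborel) = (\<integral>\<^sup>+p. F (Complex (fst p) (snd p)) \<partial>(lborel \<Otimes>\<^sub>M lborel))"
    by (subst lborel_complex_eq_distr_Complex[symmetric], subst nn_integral_distr) auto
  also have "\<dots> = (\<integral>\<^sup>+a. \<integral>\<^sup>+b. F (Complex a b) \<partial>lborel \<partial>lborel)"
    by (subst lborel.nn_integral_fst[symmetric]) (auto simp: case_prod_unfold)
  finally show ?thesis .
qed

lemma nn_integral_powr_Icc:
  fixes p R :: real
  assumes "p > -1" "R \<ge> 0"
  shows "(\<integral>\<^sup>+a. ennreal (a powr p) * indicator {0..R} a \<partial>lborel) = ennreal (R powr (p + 1) / (p + 1))"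
  by (rule nn_integral_has_integral_lebesgue'[OF _ has_integral_powr_from_0]) (use assms in auto)

lemma nn_integral_exp_neg_mult_square:
  fixes y :: real
  assumes y: "y > 0"
  shows "(\<integral>\<^sup>+c. ennreal (exp (- (y * c\<^sup>2))) \<partial>lborel) = ennreal (sqrt (pi / y))"
proof -
  define \<sigma> where "\<sigma> = 1 / sqrt (2 * y)"
  have \<sigma>: "\<sigma> > 0" "\<sigma>\<^sup>2 = 1 / (2 * y)" using y by (simp_all add: \<sigma>_def power_divide)
  have density: "exp (- (y * c\<^sup>2)) = sqrt (pi / y) * normal_density 0 \<sigma> c" for c
  proof -
    have "sqrt (2 * pi * \<sigma>\<^sup>2) = sqrt (pi / y)" "- (c - 0)\<^sup>2 / (2 * \<sigma>\<^sup>2) = - (y * c\<^sup>2)"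
      using \<sigma> y by (simp_all add: field_simps)
    then show ?thesis using y unfolding normal_density_def by simp
  qed
  have "(\<integral>\<^sup>+c. ennreal (exp (- (y * c\<^sup>2))) \<partial>lborel)
      = ennreal (sqrt (pi / y)) * (\<integral>\<^sup>+c. ennreal (normal_density 0 \<sigma> c) \<partial>lborel)"
    using y by (subst nn_integral_cmult[symmetric]) (auto simp: density ennreal_mult')
  also have "(\<integral>\<^sup>+c. ennreal (normal_density 0 \<sigma> c) \<partial>lborel) = 1"
    using \<sigma> by (subst nn_integral_eq_integral[OF integrable_normal_density])
      (auto simp: integral_normal_density)
  finally show ?thesis by simp
qed

lemma Gamma_mult_powr_conv_nn_integral:
  fixes q w :: real
  assumes q: "q > 0" and w: "w > 0"
  shows "ennreal (Gamma q * w powr (-q))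
    = (\<integral>\<^sup>+y. ennreal (indicator {0..} y * y powr (q - 1) * exp (- (w * y))) \<partial>lborel)"
proof -
  define g where "g y = indicator {0..} y * y powr (q - 1) / exp y" for y :: real
  have scaled: "g (w * y) = w powr (q - 1) * (indicator {0..} y * y powr (q - 1) * exp (- (w * y)))"
    for y
    using w by (cases "y \<ge> 0") (auto simp: g_def powr_mult exp_minus field_simps zero_le_mult_iff)
  define I where "I y = indicator {0..} y * y powr (q - 1) * exp (- (w * y))" for y :: real
  have "ennreal (Gamma q) = ennreal w * (\<integral>\<^sup>+y. ennreal (g (0 + w * y)) \<partial>lborel)"
    using w Gamma_conv_nn_integral_real[OF q] nn_integral_real_affine[of "\<lambda>t. ennreal (g t)" w 0]
    by (simp add: g_def)
  also have "(\<integral>\<^sup>+y. ennreal (g (0 + w * y)) \<partial>lborel)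
      = (\<integral>\<^sup>+y. ennreal (w powr (q - 1)) * ennreal (I y) \<partial>lborel)"
    by (intro nn_integral_cong) (simp only: add_0 scaled I_def ennreal_mult'[OF powr_ge_zero])
  also have "\<dots> = ennreal (w powr (q - 1)) * (\<integral>\<^sup>+y. ennreal (I y) \<partial>lborel)"
    by (rule nn_integral_cmult) (simp add: I_def)
  also have "ennreal w * (ennreal (w powr (q - 1)) * X) = ennreal (w powr q) * X" for X
    using w by (simp add: mult.assoc[symmetric] ennreal_mult'[symmetric] powr_diff)
  finally have "ennreal (Gamma q) = ennreal (w powr q) * (\<integral>\<^sup>+y. ennreal (I y) \<partial>lborel)" .
  then have "ennreal (w powr (-q)) * ennreal (Gamma q)
      = ennreal (w powr (-q) * w powr q) * (\<integral>\<^sup>+y. ennreal (I y) \<partial>lborel)"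
    by (simp add: ennreal_mult' mult.assoc)
  then show ?thesis
    using w q by (simp add: I_def powr_minus ennreal_mult'[symmetric] mult.commute)
qed

lemma nn_integral_Gamma_kernel_Gaussian:
  fixes q y :: real
  assumes y: "y > 0"
  shows "(\<integral>\<^sup>+c. ennreal (y powr (q - 1) * exp (- ((1 + c\<^sup>2) * y))) \<partial>lborel)
    = ennreal (sqrt pi * (y powr (q - 1/2 - 1) / exp y))"
proof -
  have "y powr (q - 1) * exp (- ((1 + c\<^sup>2) * y)) = y powr (q - 1) / exp y * exp (- (y * c\<^sup>2))" for c
    by (simp add: algebra_simps exp_diff exp_minus field_simps)
  then have "(\<integral>\<^sup>+c. ennreal (y powr (q - 1) * exp (- ((1 + c\<^sup>2) * y))) \<partial>lborel)
      = (\<integral>\<^sup>+c. ennreal (y powr (q - 1) / exp y) * ennreal (exp (- (y * c\<^sup>2))) \<partial>lborel)"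
    by (simp only: ennreal_mult'[OF divide_nonneg_nonneg[OF powr_ge_zero exp_ge_zero]])
  also have "\<dots> = ennreal (y powr (q - 1) / exp y) * (\<integral>\<^sup>+c. ennreal (exp (- (y * c\<^sup>2))) \<partial>lborel)"
    by (rule nn_integral_cmult) simp
  also have "\<dots> = ennreal (y powr (q - 1) / exp y * sqrt (pi / y))"
    using y by (simp add: nn_integral_exp_neg_mult_square ennreal_mult'[symmetric])
  also have "y powr (q - 1) / exp y * sqrt (pi / y) = sqrt pi * (y powr (q - 1/2 - 1) / exp y)"
  proof -
    have "y powr (q - 1) = y powr (q - 1/2 - 1) * y powr (1/2)"
      by (simp flip: powr_add)
    then show ?thesis using y by (simp add: powr_half_sqrt real_sqrt_divide field_simps)
  qed
  finally show ?thesis .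
qed

lemma nn_integral_one_plus_square_powr:
  fixes q :: real
  assumes q: "q > 1/2"
  shows "(\<integral>\<^sup>+c. ennreal ((1 + c\<^sup>2) powr (-q)) \<partial>lborel) = ennreal (sqrt pi * Gamma (q - 1/2) / Gamma q)"
proof -
  have Gq: "Gamma q > 0" using q by simp
  define I where "I y c = indicator {0..} y * y powr (q - 1) * exp (- ((1 + c\<^sup>2) * y))" for y c :: real
  have inner: "(\<integral>\<^sup>+c. ennreal (I y c) \<partial>lborel)
      = ennreal (sqrt pi * (indicator {0..} y * y powr (q - 1/2 - 1) / exp y))" if "y \<noteq> 0" for y
    using that by (cases "y > 0") (simp_all add: I_def nn_integral_Gamma_kernel_Gaussian)
  have "ennreal (Gamma q) * (\<integral>\<^sup>+c. ennreal ((1 + c\<^sup>2) powr (-q)) \<partial>lborel)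
      = (\<integral>\<^sup>+c. ennreal (Gamma q * (1 + c\<^sup>2) powr (-q)) \<partial>lborel)"
    using Gq by (subst nn_integral_cmult[symmetric]) (auto simp: ennreal_mult')
  also have "\<dots> = (\<integral>\<^sup>+c. \<integral>\<^sup>+y. ennreal (I y c) \<partial>lborel \<partial>lborel)"
    using q by (intro nn_integral_cong)
      (simp add: I_def mult.commute[of "1 + _\<^sup>2"] Gamma_mult_powr_conv_nn_integral add_pos_nonneg)
  also have "\<dots> = (\<integral>\<^sup>+y. \<integral>\<^sup>+c. ennreal (I y c) \<partial>lborel \<partial>lborel)"
    by (subst lborel_pair.Fubini') (auto simp: case_prod_unfold I_def)
  also have "\<dots> = (\<integral>\<^sup>+y. ennreal (sqrt pi * (indicator {0..} y * y powr (q - 1/2 - 1) / exp y)) \<partial>lborel)"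
    by (intro nn_integral_cong_AE eventually_mono[OF AE_lborel_singleton[of 0]] inner)
  also have "\<dots> = ennreal (sqrt pi)
      * (\<integral>\<^sup>+y. ennreal (indicator {0..} y * y powr (q - 1/2 - 1) / exp y) \<partial>lborel)"
    by (subst nn_integral_cmult[symmetric]) (auto intro!: nn_integral_cong simp: ennreal_mult'[symmetric])
  also have "\<dots> = ennreal (sqrt pi * Gamma (q - 1/2))"
    using q by (subst Gamma_conv_nn_integral_real[symmetric]) (auto simp: ennreal_mult')
  finally have "ennreal (Gamma q) * (\<integral>\<^sup>+c. ennreal ((1 + c\<^sup>2) powr (-q)) \<partial>lborel)
      = ennreal (sqrt pi * Gamma (q - 1/2))" .
  then have "ennreal (1 / Gamma q) * (ennreal (Gamma q) * (\<integral>\<^sup>+c. ennreal ((1 + c\<^sup>2) powr (-q)) \<partial>lborel))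
      = ennreal (sqrt pi * Gamma (q - 1/2) / Gamma q)"
    using Gq by (simp add: ennreal_mult'[symmetric])
  then show ?thesis
    using Gq by (simp add: mult.assoc[symmetric] ennreal_mult'[symmetric])
qed

lemma Complex_mem_cball_1_1_iff: "Complex a b \<in> cball 1 1 \<longleftrightarrow> (a - 1)\<^sup>2 + b\<^sup>2 \<le> 1"
proof -
  have "1 - Complex a b = Complex (1 - a) (- b)" by (simp add: complex_eq_iff)
  then have "dist 1 (Complex a b) = sqrt ((a - 1)\<^sup>2 + b\<^sup>2)"
    by (simp add: dist_norm complex_norm power2_commute[of 1 a])
  then show ?thesis by (simp add: mem_cball)
qed

text \<open>On the vertical line through \<open>a > 0\<close>, substituting \<open>b = a c\<close> turns the disc \<open>cball 1 1\<close>
  into the condition \<open>a (1 + c\<^sup>2) \<le> 2\<close> and \<open>|a + i b|\<close> into \<open>a \<surd>(1 + c\<^sup>2)\<close>.\<close>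
lemma nn_integral_cball_1_1_slice:
  fixes s a :: real
  assumes "a \<noteq> 0"
  shows "(\<integral>\<^sup>+b. ennreal (indicator (cball 1 1) (Complex a b) * cmod (Complex a b) powr s) \<partial>lborel)
    = (\<integral>\<^sup>+c. ennreal (indicator {0<..} a * indicator {..2} (a * (1 + c\<^sup>2))
                        * a powr (s + 1) * (1 + c\<^sup>2) powr (s / 2)) \<partial>lborel)"
proof (cases "a > 0")
  case False
  with assms have "a < 0" by simp
  then have "1 < (1 - a)\<^sup>2" by (simp add: one_less_power)
  then have "\<not> (a - 1)\<^sup>2 + b\<^sup>2 \<le> 1" for b
    by (simp only: power2_commute[of a 1]) (use zero_le_power2[of b] in linarith)
  then show ?thesis
    using \<open>a < 0\<close> by (simp add: indicator_def Complex_mem_cball_1_1_iff del: mem_cball)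
next
  case a: True
  have slice: "a * (indicator (cball 1 1) (Complex a (a * c)) * cmod (Complex a (a * c)) powr s)
      = indicator {..2} (a * (1 + c\<^sup>2)) * a powr (s + 1) * (1 + c\<^sup>2) powr (s / 2)" for c
  proof -
    have "(a - 1)\<^sup>2 + (a * c)\<^sup>2 \<le> 1 \<longleftrightarrow> a * (a * (1 + c\<^sup>2)) \<le> a * 2"
      by (simp add: power2_eq_square algebra_simps)
    then have mem: "Complex a (a * c) \<in> cball 1 1 \<longleftrightarrow> a * (1 + c\<^sup>2) \<le> 2"
      using a by (simp add: Complex_mem_cball_1_1_iff del: mem_cball)
    have "cmod (Complex a (a * c)) = sqrt ((a\<^sup>2) * (1 + c\<^sup>2))"
      by (simp add: complex_norm power2_eq_square algebra_simps)
    also have "\<dots> = a * sqrt (1 + c\<^sup>2)"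
      using a by (simp add: real_sqrt_mult)
    finally have "cmod (Complex a (a * c)) powr s = a powr s * (1 + c\<^sup>2) powr (s / 2)"
      using a by (simp add: powr_mult powr_half_sqrt[symmetric] powr_powr add_pos_nonneg)
    then show ?thesis
      using a by (simp add: mem indicator_def powr_add del: mem_cball)
  qed
  have [measurable]: "cball (1::complex) 1 \<in> sets borel" by simp
  have "(\<integral>\<^sup>+b. ennreal (indicator (cball 1 1) (Complex a b) * cmod (Complex a b) powr s) \<partial>lborel)
      = ennreal a * (\<integral>\<^sup>+c. ennreal (indicator (cball 1 1) (Complex a (a * c))
                                      * cmod (Complex a (a * c)) powr s) \<partial>lborel)"
    using a by (subst nn_integral_real_affine[where t = 0 and c = a]) auto
  also have "\<dots> = (\<integral>\<^sup>+c. ennreal a * ennreal (indicator (cball 1 1) (Complex a (a * c))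
                                      * cmod (Complex a (a * c)) powr s) \<partial>lborel)"
    by (rule nn_integral_cmult[symmetric]) measurable
  also have "\<dots> = (\<integral>\<^sup>+c. ennreal (indicator {0<..} a * indicator {..2} (a * (1 + c\<^sup>2))
                            * a powr (s + 1) * (1 + c\<^sup>2) powr (s / 2)) \<partial>lborel)"
    using a by (intro nn_integral_cong) (simp add: ennreal_mult'[symmetric] slice)
  finally show ?thesis .
qed

lemma nn_integral_radial_segment:
  fixes s w :: real
  assumes s: "s > -2" and w: "w > 0"
  shows "(\<integral>\<^sup>+a. ennreal (indicator {0<..} a * indicator {..2} (a * w) * a powr (s + 1) * w powr (s / 2)) \<partial>lborel)
    = ennreal (2 powr (s + 2) / (s + 2) * w powr (- (s / 2 + 2)))"
proof -
  have "ennreal (indicator {0<..} a * indicator {..2} (a * w) * a powr (s + 1) * w powr (s / 2))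
      = ennreal (w powr (s / 2)) * (ennreal (a powr (s + 1)) * indicator {0..2 / w} a)" for a
    using w by (cases "a > 0"; cases "a = 0")
      (auto simp: indicator_def ennreal_mult'[symmetric] field_simps)
  then have "(\<integral>\<^sup>+a. ennreal (indicator {0<..} a * indicator {..2} (a * w) * a powr (s + 1) * w powr (s / 2)) \<partial>lborel)
      = ennreal (w powr (s / 2)) * (\<integral>\<^sup>+a. ennreal (a powr (s + 1)) * indicator {0..2 / w} a \<partial>lborel)"
    by (simp add: nn_integral_cmult)
  also have "\<dots> = ennreal (w powr (s / 2) * ((2 / w) powr (s + 2) / (s + 2)))"
    using s w by (simp add: nn_integral_powr_Icc add.assoc ennreal_mult'[symmetric])
  also have "w powr (s / 2) * ((2 / w) powr (s + 2) / (s + 2)) = 2 powr (s + 2) / (s + 2) * w powr (- (s / 2 + 2))"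
  proof -
    have "w powr (s / 2) / w powr (s + 2) = w powr (- (s / 2 + 2))"
      using w by (simp flip: powr_diff)
    moreover have "(2 / w) powr (s + 2) = 2 powr (s + 2) / w powr (s + 2)"
      using w by (simp add: powr_divide)
    moreover have "a * (b / c / d) = b / d * (a / c)" for a b c d :: real
      by (simp add: divide_inverse mult_ac)
    ultimately show ?thesis by (simp only:)
  qed
  finally show ?thesis .
qed

lemma nn_integral_cball_norm_plus_one_powr:
  fixes s :: real
  assumes s: "s > -2"
  shows "(\<integral>\<^sup>+x. ennreal (indicator (cball 0 1) x * cmod (x + 1) powr s) \<partial>lborel)
       = ennreal (2 powr (s + 2) / (s + 2) * (sqrt pi * Gamma ((s + 3) / 2) / Gamma (s / 2 + 2)))"
proof -
  have [measurable]: "cball (1::complex) 1 \<in> sets borel" by simp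
  define h where "h a c = ennreal (indicator {0<..} a * indicator {..2} (a * (1 + c\<^sup>2))
                                    * a powr (s + 1) * (1 + c\<^sup>2) powr (s / 2))" for a c
  have [measurable]: "case_prod h \<in> borel_measurable (lborel \<Otimes>\<^sub>M lborel)"
    unfolding h_def case_prod_unfold by measurable
  have radial: "(\<integral>\<^sup>+a. h a c \<partial>lborel)
      = ennreal (2 powr (s + 2) / (s + 2)) * ennreal ((1 + c\<^sup>2) powr (- (s / 2 + 2)))" for c
    using s by (simp add: h_def nn_integral_radial_segment add_pos_nonneg ennreal_mult'[symmetric])
  have "(\<integral>\<^sup>+x. ennreal (indicator (cball 0 1) x * cmod (x + 1) powr s) \<partial>lborel)
      = (\<integral>\<^sup>+y. ennreal (indicator (cball 1 1) y * cmod y powr s) \<partial>distr lborel borel ((+) 1))"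
    by (subst nn_integral_distr)
      (auto intro!: nn_integral_cong simp: indicator_def dist_norm add.commute)
  also have "\<dots> = (\<integral>\<^sup>+a. \<integral>\<^sup>+b. ennreal (indicator (cball 1 1) (Complex a b) * cmod (Complex a b) powr s) \<partial>lborel \<partial>lborel)"
    by (simp add: lborel_distr_plus nn_integral_lborel_complex)
  also have "\<dots> = (\<integral>\<^sup>+a. \<integral>\<^sup>+c. h a c \<partial>lborel \<partial>lborel)"
    unfolding h_def
    by (intro nn_integral_cong_AE eventually_mono[OF AE_lborel_singleton[of 0]] nn_integral_cball_1_1_slice)
  also have "\<dots> = (\<integral>\<^sup>+c. \<integral>\<^sup>+a. h a c \<partial>lborel \<partial>lborel)"
    by (rule lborel_pair.Fubini'[symmetric]) measurable
  also have "\<dots> = ennreal (2 powr (s + 2) / (s + 2)) * (\<integral>\<^sup>+c. ennreal ((1 + c\<^sup>2) powr (- (s / 2 + 2))) \<partial>lborel)"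
    by (simp add: radial nn_integral_cmult)
  also have "\<dots> = ennreal (2 powr (s + 2) / (s + 2)) * ennreal (sqrt pi * Gamma (s / 2 + 2 - 1/2) / Gamma (s / 2 + 2))"
    using s by (subst nn_integral_one_plus_square_powr) auto
  also have "s / 2 + 2 - 1/2 = (s + 3) / 2" by simp
  finally show ?thesis
    using s by (simp add: ennreal_mult'[symmetric])
qed

lemma Gamma_legendre_duplication_real:
  fixes x :: real
  assumes x: "x > 0"
  shows "Gamma x * Gamma (x + 1/2) = exp ((1 - 2 * x) * ln 2) * sqrt pi * Gamma (2 * x)"
proof -
  have "complex_of_real y \<notin> \<int>\<^sub>\<le>\<^sub>0" if "y > 0" for y
    using that by (auto simp: of_real_in_nonpos_Ints_iff elim!: nonpos_Ints_cases')
  from this[of x] this[of "x + 1/2"] x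
  have "Gamma (complex_of_real x) * Gamma (complex_of_real x + 1/2) =
      exp ((1 - 2 * complex_of_real x) * of_real (ln 2)) * of_real (sqrt pi) * Gamma (2 * complex_of_real x)"
    by (intro Gamma_legendre_duplication) simp_all
  then have "complex_of_real (Gamma x * Gamma (x + 1/2))
      = complex_of_real (exp ((1 - 2 * x) * ln 2) * sqrt pi * Gamma (2 * x))"
    by (simp flip: Gamma_complex_of_real exp_of_real)
  then show ?thesis by (simp only: of_real_eq_iff)
qed

definition mahler_gf :: "'a :: Gamma \<Rightarrow> 'a" where
  "mahler_gf z = Gamma (z + 2) / Gamma (z / 2 + 2) ^ 2"

lemma mahler_gf_of_real: "mahler_gf (of_real t :: complex) = of_real (mahler_gf t)"
  by (simp add: mahler_gf_def flip: Gamma_complex_of_real)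

lemma Gamma_ratio_eq_mahler_gf:
  fixes s :: real
  assumes s: "s > -2"
  shows "2 powr (s + 2) / (s + 2) * (sqrt pi * Gamma ((s + 3) / 2) / Gamma (s / 2 + 2)) = pi * mahler_gf s"
proof -
  define x where "x = s / 2 + 1"
  have x: "x > 0" using s by (simp add: x_def)
  have G1: "Gamma (s / 2 + 2) = x * Gamma x"
    using x Gamma_plus1[of x] by (simp add: x_def add.assoc nonpos_Ints_def)
  have half: "x + 1/2 = (s + 3) / 2" and double: "2 * x = s + 2" by (simp_all add: x_def)
  have G2: "Gamma ((s + 3) / 2) * Gamma x = exp ((1 - (s + 2)) * ln 2) * sqrt pi * Gamma (s + 2)"
    using Gamma_legendre_duplication_real[OF x] unfolding half double by (simp only: mult.commute)
  have P: "2 powr (s + 2) * exp ((1 - (s + 2)) * ln 2) = 2"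
    by (simp add: powr_def flip: exp_add) (simp add: algebra_simps)
  have Gx: "Gamma x > 0" using x by simp
  have "2 powr (s + 2) / (s + 2) * (sqrt pi * Gamma ((s + 3) / 2) / Gamma (s / 2 + 2))
      = 2 powr (s + 2) * sqrt pi * (Gamma ((s + 3) / 2) * Gamma x) / (2 * x * (x * Gamma x) * Gamma x)"
    using x Gx unfolding G1 double[symmetric] by (simp add: field_simps)
  also have "\<dots> = (2 powr (s + 2) * exp ((1 - (s + 2)) * ln 2)) * (sqrt pi * sqrt pi) * Gamma (s + 2)
      / (2 * (x * Gamma x) ^ 2)"
    unfolding G2 by (simp add: field_simps power2_eq_square)
  also have "\<dots> = pi * Gamma (s + 2) / (x * Gamma x) ^ 2"
    unfolding P by simp
  finally show ?thesis by (simp add: mahler_gf_def G1)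
qed

lemma disc_integral_norm_plus_one_powr:
  fixes s :: real
  assumes s: "s > -2"
  shows "set_integrable lborel (cball 0 1) (\<lambda>x. cmod (x + 1) powr s)"
    and "(LINT x : cball 0 1 | lborel. cmod (x + 1) powr s) = pi * mahler_gf s"
proof -
  have [measurable]: "cball (0::complex) 1 \<in> sets borel" by simp
  have "pi * mahler_gf s \<ge> 0"
    using s by (simp add: mahler_gf_def)
  moreover have "(\<integral>\<^sup>+x. ennreal (indicator (cball 0 1) x * cmod (x + 1) powr s) \<partial>lborel)
      = ennreal (pi * mahler_gf s)"
    by (simp only: nn_integral_cball_norm_plus_one_powr[OF s] Gamma_ratio_eq_mahler_gf[OF s])
  ultimately have "integrable lborel (\<lambda>x. indicator (cball 0 1) x * cmod (x + 1) powr s) \<and>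
      integral\<^sup>L lborel (\<lambda>x. indicator (cball 0 1) x * cmod (x + 1) powr s) = pi * mahler_gf s"
    by (subst nn_integral_eq_integrable[symmetric]) auto
  then show "set_integrable lborel (cball 0 1) (\<lambda>x. cmod (x + 1) powr s)"
    and "(LINT x : cball 0 1 | lborel. cmod (x + 1) powr s) = pi * mahler_gf s"
    by (simp_all add: set_integrable_def set_lebesgue_integral_def)
qed

section \<open>Expansion in the exponent\<close>

lemma sum_power_div_fact_le_exp:
  fixes y :: real
  assumes "y \<ge> 0"
  shows "(\<Sum>h<n. y ^ h / fact h) \<le> exp y"
proof -
  have "(\<lambda>h. y ^ h / fact h) sums exp y"
    using exp_converges[of y] by (simp add: divide_inverse mult.commute)
  then show ?thesis
    using assms sum_le_suminf[of "\<lambda>h. y ^ h / fact h" "{..<n}"] by (auto simp: sums_iff)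
qed

lemma power_div_fact_le_exp:
  fixes y :: real
  assumes "y \<ge> 0"
  shows "y ^ h / fact h \<le> exp y"
proof -
  have "y ^ h / fact h \<le> (\<Sum>k<Suc h. y ^ k / fact k)"
    using assms by (intro member_le_sum) auto
  also have "\<dots> \<le> exp y"
    using assms by (rule sum_power_div_fact_le_exp)
  finally show ?thesis .
qed

lemma sums_set_integral_exp:
  fixes L :: "'a \<Rightarrow> real" and t :: real
  assumes [measurable]: "D \<in> sets M" "L \<in> borel_measurable M"
    and int_exp: "set_integrable M D (\<lambda>x. exp \<bar>L x\<bar>)" and t: "\<bar>t\<bar> \<le> 1"
  shows "(\<lambda>h. t ^ h / fact h * (LINT x:D|M. L x ^ h)) sums (LINT x:D|M. exp (t * L x))"
proof -
  define w where "w x = indicator D x * exp \<bar>L x\<bar>" for x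
  define s where "s n x = indicator D x * (\<Sum>h<n. (t * L x) ^ h / fact h)" for n x
  have w: "integrable M w"
    using int_exp by (simp add: w_def[abs_def] set_integrable_def)
  have power_int: "integrable M (\<lambda>x. indicator D x * L x ^ h)" for h
  proof (rule Bochner_Integration.integrable_bound)
    show "integrable M (\<lambda>x. fact h * w x)" using w by simp
    have "\<bar>L x\<bar> ^ h \<le> fact h * exp \<bar>L x\<bar>" for x
      using power_div_fact_le_exp[of "\<bar>L x\<bar>" h] by (simp add: field_simps)
    then show "AE x in M. norm (indicator D x * L x ^ h) \<le> norm (fact h * w x)"
      by (simp add: w_def indicator_def abs_mult power_abs)
  qed measurable
  have "(\<lambda>n. integral\<^sup>L M (s n)) \<longlonglongrightarrow> (\<integral>x. indicator D x * exp (t * L x) \<partial>M)"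
  proof (rule integral_dominated_convergence[OF _ _ w])
    show "AE x in M. (\<lambda>n. s n x) \<longlonglongrightarrow> indicator D x * exp (t * L x)"
      using exp_converges[of "t * L x" for x]
      by (auto simp: s_def sums_def divide_inverse mult.commute intro!: tendsto_mult)
    have "\<bar>s n x\<bar> \<le> w x" for n x
    proof -
      have "\<bar>\<Sum>h<n. (t * L x) ^ h / fact h\<bar> \<le> (\<Sum>h<n. \<bar>t * L x\<bar> ^ h / fact h)"
        by (rule order.trans[OF sum_abs]) (simp add: power_abs)
      also have "\<dots> \<le> exp \<bar>t * L x\<bar>" by (rule sum_power_div_fact_le_exp) simp
      also have "\<dots> \<le> exp \<bar>L x\<bar>" using t by (simp add: abs_mult mult_left_le_one_le)
      finally show ?thesis by (simp add: s_def w_def indicator_def)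
    qed
    then show "\<And>n. AE x in M. norm (s n x) \<le> w x" by simp
  qed (simp_all add: s_def[abs_def])
  moreover have "integral\<^sup>L M (s n) = (\<Sum>h<n. t ^ h / fact h * (\<integral>x. indicator D x * L x ^ h \<partial>M))" for n
  proof -
    have "s n = (\<lambda>x. \<Sum>h<n. t ^ h / fact h * (indicator D x * L x ^ h))"
      by (auto simp: s_def sum_distrib_left power_mult_distrib field_simps)
    then show ?thesis using power_int by simp
  qed
  ultimately show ?thesis
    by (simp add: sums_def set_lebesgue_integral_def)
qed

lemma exp_abs_ln_le:
  fixes r :: real
  assumes "r > 0"
  shows "exp \<bar>ln r\<bar> \<le> r powr 1 + r powr (-1)"
  using assms by (cases "ln r \<ge> 0") (simp_all add: powr_def exp_minus)

lemma mD_sums_mahler_gf: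
  fixes t :: real
  assumes t: "\<bar>t\<bar> \<le> 1"
  shows "(\<lambda>h. mD h / fact h * t ^ h) sums mahler_gf t"
proof -
  have [measurable]: "cball (0::complex) 1 \<in> sets borel" by simp
  have ne: "AE x in lborel. x \<noteq> (-1 :: complex)" by (rule AE_lborel_singleton)
  have "set_integrable lborel (cball 0 1) (\<lambda>x. cmod (x + 1) powr 1 + cmod (x + 1) powr (-1))"
    by (intro set_integral_add disc_integral_norm_plus_one_powr) simp_all
  then have "set_integrable lborel (cball 0 1) (\<lambda>x. exp \<bar>ln (cmod (x + 1))\<bar>)"
    unfolding set_integrable_def
  proof (rule Bochner_Integration.integrable_bound)
    show "AE x in lborel. norm (indicator (cball 0 1) x *\<^sub>R exp \<bar>ln (cmod (x + 1))\<bar>)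
        \<le> norm (indicator (cball 0 1) x *\<^sub>R (cmod (x + 1) powr 1 + cmod (x + 1) powr (-1)))"
      using ne by eventually_elim
        (auto simp: indicator_def exp_abs_ln_le add_eq_0_iff2 intro!: order.trans[OF exp_abs_ln_le])
  qed measurable
  then have "(\<lambda>h. t ^ h / fact h * (LINT x:cball 0 1|lborel. ln (cmod (x + 1)) ^ h))
      sums (LINT x:cball 0 1|lborel. exp (t * ln (cmod (x + 1))))"
    using t by (intro sums_set_integral_exp) simp_all
  also have "(LINT x:cball 0 1|lborel. exp (t * ln (cmod (x + 1))))
      = (LINT x:cball 0 1|lborel. cmod (x + 1) powr t)"
    using ne by (intro set_lebesgue_integral_cong_AE) (auto simp: powr_def mult.commute add_eq_0_iff2)
  also have "\<dots> = pi * mahler_gf t"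
    using t by (intro disc_integral_norm_plus_one_powr) simp
  finally have "(\<lambda>h. t ^ h / fact h * (LINT x:cball 0 1|lborel. ln (cmod (x + 1)) ^ h) / pi)
      sums (pi * mahler_gf t / pi)"
    by (rule sums_divide)
  then show ?thesis
    by (simp add: mD_def field_simps)
qed

section \<open>The moments as derivatives of \<open>mahler_gf\<close>\<close>

lemma not_nonpos_Ints_if_Re_pos: "Re z > 0 \<Longrightarrow> z \<notin> \<int>\<^sub>\<le>\<^sub>0"
  by (auto elim!: nonpos_Ints_cases)

lemma mahler_gf_holomorphic: "mahler_gf holomorphic_on {z. Re z > -2}"
proof -
  have "z + 2 \<notin> \<int>\<^sub>\<le>\<^sub>0" "z / 2 + 2 \<notin> \<int>\<^sub>\<le>\<^sub>0" if "Re z > -2" for z :: complex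
    using that by (auto intro!: not_nonpos_Ints_if_Re_pos)
  then show ?thesis
    unfolding mahler_gf_def[abs_def]
    by (intro holomorphic_intros holomorphic_Gamma' power_not_zero Gamma_nonzero) auto
qed

lemma ball_0_1_subset_Re_gt: "ball (0::complex) 1 \<subseteq> {z. Re z > -2}"
proof
  fix z :: complex
  assume "z \<in> ball 0 1"
  then have "\<bar>Re z\<bar> < 1" using abs_Re_le_cmod[of z] by simp
  then show "z \<in> {z. Re z > -2}" by simp
qed

definition mahler_fps :: "complex fps" where
  "mahler_fps = Abs_fps (\<lambda>h. complex_of_real (mD h / fact h))"

lemma sums_mahler_fps_of_real:
  fixes t :: real
  assumes "\<bar>t\<bar> \<le> 1"
  shows "(\<lambda>h. fps_nth mahler_fps h * complex_of_real t ^ h) sums complex_of_real (mahler_gf t)"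
proof -
  have "(\<lambda>h. complex_of_real (mD h / fact h * t ^ h)) sums complex_of_real (mahler_gf t)"
    using mD_sums_mahler_gf[OF assms] by (simp only: sums_of_real_iff)
  then show ?thesis by (simp add: mahler_fps_def)
qed

lemma fps_conv_radius_mahler_fps: "fps_conv_radius mahler_fps \<ge> 1"
proof -
  have "summable (\<lambda>h. fps_nth mahler_fps h * 1 ^ h)"
    using sums_mahler_fps_of_real[of 1] by (simp add: sums_iff)
  then have "conv_radius (fps_nth mahler_fps) \<ge> norm (1 :: complex)"
    by (rule conv_radius_geI)
  then show ?thesis by (simp add: fps_conv_radius_def one_ereal_def)
qed

lemma eval_mahler_fps:
  assumes z: "z \<in> ball 0 1"
  shows "eval_fps mahler_fps z = mahler_gf z"
proof -
  define U where "U = complex_of_real ` {-1<..<1}"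
  have "ball (0::complex) 1 \<subseteq> eball 0 (fps_conv_radius mahler_fps)"
  proof
    fix w :: complex
    assume "w \<in> ball 0 1"
    then have "ereal (norm w) < 1" by simp
    then show "w \<in> eball 0 (fps_conv_radius mahler_fps)"
      using less_le_trans[OF _ fps_conv_radius_mahler_fps] by simp
  qed
  then have holo: "(\<lambda>z. eval_fps mahler_fps z - mahler_gf z) holomorphic_on ball 0 1"
    by (intro holomorphic_intros holomorphic_on_eval_fps
        holomorphic_on_subset[OF mahler_gf_holomorphic ball_0_1_subset_Re_gt])
  have "0 islimpt U"
  proof (rule islimptI)
    fix T :: "complex set"
    assume "0 \<in> T" "open T"
    then obtain e where e: "e > 0" "ball 0 e \<subseteq> T" by (auto simp: open_contains_ball)
    define y where "y = min (e / 2) (1 / 2)"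
    have "y > 0" "y < e" "y < 1" using e by (auto simp: y_def)
    then show "\<exists>y\<in>U. y \<in> T \<and> y \<noteq> 0"
      using e by (intro bexI[of _ "complex_of_real y"]) (auto simp: U_def)
  qed
  moreover have "eval_fps mahler_fps w - mahler_gf w = 0" if "w \<in> U" for w
    using that sums_mahler_fps_of_real
    by (auto simp: U_def eval_fps_def sums_iff mahler_gf_of_real)
  ultimately have "eval_fps mahler_fps z - mahler_gf z = 0"
    by (intro analytic_continuation[OF holo _ _ _ _ _ _ z]) (auto simp: U_def)
  then show ?thesis by simp
qed

lemma mahler_gf_has_fps_expansion: "mahler_gf has_fps_expansion mahler_fps"
proof -
  have "fps_conv_radius mahler_fps > 0"
    using fps_conv_radius_mahler_fps by (rule less_le_trans[rotated]) simp
  moreover have "eventually (\<lambda>z. z \<in> ball 0 1) (nhds (0::complex))"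
    by (rule eventually_nhds_in_open) simp_all
  ultimately show ?thesis
    unfolding has_fps_expansion_def by (auto elim!: eventually_mono simp: eval_mahler_fps)
qed

lemma mD_eq_higher_deriv_mahler_gf: "complex_of_real (mD n) = (deriv ^^ n) mahler_gf 0"
  using fps_nth_fps_expansion[OF mahler_gf_has_fps_expansion, of n]
  by (simp add: mahler_fps_def field_simps)

definition mahler_psi :: "nat \<Rightarrow> complex \<Rightarrow> complex" where
  "mahler_psi k z = Polygamma k (z + 2) - (1/2) ^ k * Polygamma k (z / 2 + 2)"

lemma not_nonpos_Ints_shifts:
  fixes z :: complex
  assumes "Re z > -2"
  shows "z + 2 \<notin> \<int>\<^sub>\<le>\<^sub>0" "z / 2 + 2 \<notin> \<int>\<^sub>\<le>\<^sub>0"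
  using assms by (auto intro!: not_nonpos_Ints_if_Re_pos)

lemma has_field_derivative_mahler_psi:
  assumes "Re z > -2"
  shows "(mahler_psi k has_field_derivative mahler_psi (Suc k) z) (at z)"
  unfolding mahler_psi_def[abs_def]
  using not_nonpos_Ints_shifts[OF assms]
  by (auto intro!: derivative_eq_intros simp: algebra_simps)

lemma has_field_derivative_mahler_gf:
  assumes "Re z > -2"
  shows "(mahler_gf has_field_derivative mahler_gf z * mahler_psi 0 z) (at z)"
proof -
  note ne = not_nonpos_Ints_shifts[OF assms]
  have G: "Gamma (z / 2 + 2) \<noteq> 0" using ne(2) by (rule Gamma_nonzero)
  have "((\<lambda>w. Gamma (w + 2) / Gamma (w / 2 + 2) ^ 2) has_field_derivative
      (Gamma (z + 2) * Digamma (z + 2) * 1 * Gamma (z / 2 + 2) ^ 2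
       - Gamma (z + 2) * (of_nat 2 * Gamma (z / 2 + 2) ^ (2 - 1)
           * (Gamma (z / 2 + 2) * Digamma (z / 2 + 2) * (1 / 2))))
      / (Gamma (z / 2 + 2) ^ 2 * Gamma (z / 2 + 2) ^ 2)) (at z)"
    by (intro DERIV_divide DERIV_power DERIV_chain2[OF has_field_derivative_Gamma] ne G power_not_zero)
      (auto intro!: derivative_eq_intros simp: ne)
  then show ?thesis
    unfolding mahler_gf_def[abs_def]
    by (rule DERIV_cong) (use G in \<open>simp add: mahler_gf_def mahler_psi_def field_simps power2_eq_square\<close>)
qed

lemma higher_deriv_step:
  assumes S: "open S" "z \<in> S"
    and f: "\<And>w. w \<in> S \<Longrightarrow> (f has_field_derivative f w * p w) (at w)"
    and IH: "\<And>w. w \<in> S \<Longrightarrow> (deriv ^^ n) f w = f w * R w"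
    and R: "\<And>w. w \<in> S \<Longrightarrow> (R has_field_derivative R' w - p w * R w) (at w)"
  shows "(deriv ^^ Suc n) f z = f z * R' z"
proof -
  have "((\<lambda>w. f w * R w) has_field_derivative f z * R' z) (at z)"
    using DERIV_mult[OF f[OF S(2)] R[OF S(2)]] by (simp add: algebra_simps)
  then have "((deriv ^^ n) f has_field_derivative f z * R' z) (at z)"
    by (rule has_field_derivative_transform_within_open[OF _ S]) (simp add: IH)
  then show ?thesis by (simp add: DERIV_imp_deriv)
qed

text \<open>As \<open>mahler_psi k\<close> is the \<open>(k + 1)\<close>-st derivative of \<open>ln mahler_gf\<close>, the \<open>n\<close>-th derivative of
  \<open>mahler_gf\<close> is \<open>mahler_gf\<close> times the complete Bell polynomial \<open>B\<^sub>n\<close> in the \<open>mahler_psi k\<close>;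
  at \<open>0\<close> all terms containing \<open>mahler_psi 0 0 = 0\<close> vanish.\<close>
lemma higher_deriv_mahler_gf_0:
  "deriv mahler_gf (0::complex) = 0"
  "(deriv ^^ 2) mahler_gf (0::complex) = mahler_psi 1 0"
  "(deriv ^^ 3) mahler_gf (0::complex) = mahler_psi 2 0"
  "(deriv ^^ 4) mahler_gf (0::complex) = mahler_psi 3 0 + 3 * mahler_psi 1 0 ^ 2"
  "(deriv ^^ 5) mahler_gf (0::complex) = mahler_psi 4 0 + 10 * mahler_psi 1 0 * mahler_psi 2 0"
proof -
  define S where "S = {z :: complex. Re z > -2}"
  have S: "open S" "0 \<in> S" by (simp_all add: S_def open_halfspace_Re_gt)
  define P where "P = mahler_psi"
  have dP: "(P k has_field_derivative P (Suc k) w) (at w)" if "w \<in> S" for k w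
    using that by (simp add: P_def S_def has_field_derivative_mahler_psi)
  have df: "(mahler_gf has_field_derivative mahler_gf w * P 0 w) (at w)" if "w \<in> S" for w
    using that by (simp add: P_def S_def has_field_derivative_mahler_gf)
  have step: "(deriv ^^ Suc n) mahler_gf z = mahler_gf z * R' z"
    if "z \<in> S" "\<And>w. w \<in> S \<Longrightarrow> (deriv ^^ n) mahler_gf w = mahler_gf w * R w"
      "\<And>w. w \<in> S \<Longrightarrow> (R has_field_derivative R' w - P 0 w * R w) (at w)" for z n R R'
    by (rule higher_deriv_step[OF S(1) that(1)]) (use df that in auto)
  define B2 where "B2 w = P 1 w + P 0 w ^ 2" for w
  define B3 where "B3 w = P 2 w + 3 * P 0 w * P 1 w + P 0 w ^ 3" for w
  define B4 where "B4 w = P 3 w + 4 * P 0 w * P 2 w + 3 * P 1 w ^ 2 + 6 * P 0 w ^ 2 * P 1 w + P 0 w ^ 4" for w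
  define B5 where "B5 w = P 4 w + 5 * P 0 w * P 3 w + 10 * P 1 w * P 2 w + 10 * P 0 w ^ 2 * P 2 w
    + 15 * P 0 w * P 1 w ^ 2 + 10 * P 0 w ^ 3 * P 1 w + P 0 w ^ 5" for w
  have dB: "(P 0 has_field_derivative B2 w - P 0 w * P 0 w) (at w)"
    "(B2 has_field_derivative B3 w - P 0 w * B2 w) (at w)"
    "(B3 has_field_derivative B4 w - P 0 w * B3 w) (at w)"
    "(B4 has_field_derivative B5 w - P 0 w * B4 w) (at w)" if "w \<in> S" for w
    unfolding B2_def[abs_def] B3_def[abs_def] B4_def[abs_def]
    by (rule derivative_eq_intros dP[OF that] refl | simp add: B2_def B3_def B4_def B5_def
        algebra_simps eval_nat_numeral)+
  have D1: "(deriv ^^ 1) mahler_gf w = mahler_gf w * P 0 w" if "w \<in> S" for w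
    using step[of w 0 "\<lambda>_. 1" "P 0"] that by (auto intro!: derivative_eq_intros)
  have D2: "(deriv ^^ 2) mahler_gf w = mahler_gf w * B2 w" if "w \<in> S" for w
    using step[OF that D1 dB(1)] by (simp add: numeral_2_eq_2)
  have D3: "(deriv ^^ 3) mahler_gf w = mahler_gf w * B3 w" if "w \<in> S" for w
    using step[OF that D2 dB(2)] by (simp add: numeral_3_eq_3 numeral_2_eq_2)
  have D4: "(deriv ^^ 4) mahler_gf w = mahler_gf w * B4 w" if "w \<in> S" for w
    using step[OF that D3 dB(3)] by (simp add: eval_nat_numeral)
  have D5: "(deriv ^^ 5) mahler_gf w = mahler_gf w * B5 w" if "w \<in> S" for w
    using step[OF that D4 dB(4)] by (simp add: eval_nat_numeral)
  have "P 0 0 = 0" "mahler_gf (0 :: complex) = 1"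
    by (simp_all add: P_def mahler_psi_def mahler_gf_def Gamma_numeral)
  then show "deriv mahler_gf (0::complex) = 0"
    and "(deriv ^^ 2) mahler_gf (0::complex) = mahler_psi 1 0"
    and "(deriv ^^ 3) mahler_gf (0::complex) = mahler_psi 2 0"
    and "(deriv ^^ 4) mahler_gf (0::complex) = mahler_psi 3 0 + 3 * mahler_psi 1 0 ^ 2"
    and "(deriv ^^ 5) mahler_gf (0::complex) = mahler_psi 4 0 + 10 * mahler_psi 1 0 * mahler_psi 2 0"
    using D1[OF S(2)] D2[OF S(2)] D3[OF S(2)] D4[OF S(2)] D5[OF S(2)]
    by (simp_all add: B2_def B3_def B4_def B5_def P_def)
qed

section \<open>Polygamma and zeta values\<close>

lemma zeta_sums:
  assumes "m \<ge> 2"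
  shows "(\<lambda>n. 1 / real (Suc n) ^ m) sums zeta m"
proof -
  have "summable (\<lambda>n. inverse (real (Suc n) ^ m))"
    using inverse_power_summable[OF assms, where 'a = real] by (subst summable_Suc_iff) simp
  then show ?thesis
    unfolding zeta_def by (intro summable_sums) (simp add: divide_inverse)
qed

lemma zeta_2: "zeta 2 = pi\<^sup>2 / 6"
proof -
  have "(\<lambda>n. 1 / real (Suc n) ^ 2) sums (pi\<^sup>2 / 6)"
    using inverse_squares_sums by simp
  from sums_unique2[OF zeta_sums[of 2] this] show ?thesis by simp
qed

lemma Polygamma_2_eq_zeta:
  assumes "k \<ge> 1"
  shows "Polygamma k (2 :: real) = (-1) ^ Suc k * fact k * (zeta (Suc k) - 1)"
proof -
  have "(\<lambda>j. inverse ((2 + real j) ^ Suc k)) sums ((-1) ^ Suc k * Polygamma k 2 / fact k)"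
    using assms by (intro Polygamma_LIMSEQ) auto
  moreover have "(\<lambda>j. inverse ((2 + real j) ^ Suc k)) sums (zeta (Suc k) - 1)"
  proof -
    have "(\<lambda>n. 1 / real (Suc n) ^ Suc k) sums (zeta (Suc k) - 1 + 1 / real (Suc 0) ^ Suc k)"
      using zeta_sums[of "Suc k"] assms by simp
    then have "(\<lambda>n. 1 / real (Suc (Suc n)) ^ Suc k) sums (zeta (Suc k) - 1)"
      by (subst sums_Suc_iff)
    then show ?thesis by (simp add: divide_inverse add.commute)
  qed
  ultimately have eq: "(-1) ^ Suc k * Polygamma k 2 / fact k = zeta (Suc k) - 1"
    by (rule sums_unique2)
  have sign: "(-1 :: real) ^ Suc k * (-1) ^ Suc k = 1"
    by (simp flip: power_mult_distrib)
  have "Polygamma k (2 :: real) = (-1) ^ Suc k * fact k * ((-1) ^ Suc k * Polygamma k 2 / fact k)"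
    using sign by (simp add: field_simps)
  also have "\<dots> = (-1) ^ Suc k * fact k * (zeta (Suc k) - 1)"
    by (simp only: eq)
  finally show ?thesis .
qed

lemma mahler_psi_0_eq_zeta:
  assumes "k \<ge> 1"
  shows "mahler_psi k 0 = of_real ((1 - (1/2) ^ k) * ((-1) ^ Suc k * fact k * (zeta (Suc k) - 1)))"
proof -
  have "mahler_psi k 0 = of_real ((1 - (1/2) ^ k) * Polygamma k 2)"
    by (simp add: mahler_psi_def algebra_simps flip: Polygamma_of_real)
  then show ?thesis using assms by (simp add: Polygamma_2_eq_zeta)
qed

lemma Gamma_reflection_real:
  fixes x :: real
  shows "Gamma x * Gamma (1 - x) = pi / sin (pi * x)"
proof -
  have "complex_of_real (Gamma x * Gamma (1 - x)) = complex_of_real (pi / sin (pi * x))"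
    using Gamma_reflection_complex[of "of_real x"]
    by (simp flip: Gamma_complex_of_real sin_of_real)
  then show ?thesis by (simp only: of_real_eq_iff)
qed

lemma not_nonpos_Ints_if_pos: "(x :: real) > 0 \<Longrightarrow> x \<notin> \<int>\<^sub>\<le>\<^sub>0"
  by (auto elim!: nonpos_Ints_cases)

lemma Polygamma_reflection_Suc:
  fixes f f' :: "real \<Rightarrow> real"
  assumes refl: "\<And>x. x \<in> {0<..<1} \<Longrightarrow> Polygamma k x - (-1) ^ k * Polygamma k (1 - x) = f x"
    and f: "\<And>x. x \<in> {0<..<1} \<Longrightarrow> (f has_real_derivative f' x) (at x)"
    and x: "x \<in> {0<..<1}"
  shows "Polygamma (Suc k) x - (-1) ^ Suc k * Polygamma (Suc k) (1 - x) = f' x"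
proof -
  have "((\<lambda>x. Polygamma k x - (-1) ^ k * Polygamma k (1 - x)) has_real_derivative
      Polygamma (Suc k) x - (-1) ^ k * (Polygamma (Suc k) (1 - x) * (-1))) (at x)"
    using x by (auto intro!: derivative_eq_intros not_nonpos_Ints_if_pos)
  then have "(f has_real_derivative
      Polygamma (Suc k) x - (-1) ^ k * (Polygamma (Suc k) (1 - x) * (-1))) (at x)"
    by (rule has_field_derivative_transform_within_open[OF _ open_greaterThanLessThan x])
      (simp add: refl)
  then have "Polygamma (Suc k) x - (-1) ^ k * (Polygamma (Suc k) (1 - x) * (-1)) = f' x"
    using f[OF x] by (rule DERIV_unique)
  then show ?thesis by simp
qed

lemma sin_pi_pos: "x \<in> {0<..<1} \<Longrightarrow> sin (pi * x) > 0"
  by (intro sin_gt_zero) auto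

lemma Digamma_reflection_real:
  fixes x :: real
  assumes x: "x \<in> {0<..<1}"
  shows "Digamma x - Digamma (1 - x) = - pi * cos (pi * x) / sin (pi * x)"
proof -
  have ne: "x \<notin> \<int>\<^sub>\<le>\<^sub>0" "1 - x \<notin> \<int>\<^sub>\<le>\<^sub>0"
    using x by (auto intro!: not_nonpos_Ints_if_pos)
  have s: "sin (pi * x) > 0" using sin_pi_pos[OF x] .
  have "((\<lambda>x. Gamma x * Gamma (1 - x)) has_real_derivative
      Gamma x * Gamma (1 - x) * (Digamma x - Digamma (1 - x))) (at x)"
    using ne by (auto intro!: derivative_eq_intros simp: algebra_simps)
  then have "((\<lambda>x. pi / sin (pi * x)) has_real_derivative
      Gamma x * Gamma (1 - x) * (Digamma x - Digamma (1 - x))) (at x)"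
    by (simp add: Gamma_reflection_real)
  moreover have "((\<lambda>x. pi / sin (pi * x)) has_real_derivative
      - (pi * (cos (pi * x) * pi)) / (sin (pi * x) * sin (pi * x))) (at x)"
    using s by (auto intro!: derivative_eq_intros)
  ultimately have eq: "pi / sin (pi * x) * (Digamma x - Digamma (1 - x))
      = - (pi * (cos (pi * x) * pi)) / (sin (pi * x) * sin (pi * x))"
    by (simp add: Gamma_reflection_real DERIV_unique)
  have "Digamma x - Digamma (1 - x)
      = sin (pi * x) / pi * (pi / sin (pi * x) * (Digamma x - Digamma (1 - x)))"
    using s by simp
  also have "\<dots> = - pi * cos (pi * x) / sin (pi * x)"
    unfolding eq using s by (simp add: field_simps)
  finally show ?thesis .
qed

lemma has_real_derivative_cot_iterates:
  fixes x :: real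
  assumes "sin (pi * x) \<noteq> 0"
  shows "((\<lambda>x. - pi * cos (pi * x) / sin (pi * x)) has_real_derivative pi ^ 2 / sin (pi * x) ^ 2) (at x)"
    and "((\<lambda>x. pi ^ 2 / sin (pi * x) ^ 2) has_real_derivative
          - 2 * pi ^ 3 * cos (pi * x) / sin (pi * x) ^ 3) (at x)"
    and "((\<lambda>x. - 2 * pi ^ 3 * cos (pi * x) / sin (pi * x) ^ 3) has_real_derivative
          2 * pi ^ 4 * (sin (pi * x) ^ 2 + 3 * cos (pi * x) ^ 2) / sin (pi * x) ^ 4) (at x)"
proof -
  define S where "S x = sin (pi * x)" for x :: real
  define C where "C x = cos (pi * x)" for x :: real
  have dS: "(S has_real_derivative pi * C x) (at x)" for x
    unfolding S_def[abs_def] C_def by (auto intro!: derivative_eq_intros)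
  have dC: "(C has_real_derivative - pi * S x) (at x)" for x
    unfolding S_def C_def[abs_def] by (auto intro!: derivative_eq_intros)
  have S: "S x \<noteq> 0" using assms by (simp add: S_def)
  have "((\<lambda>x. - pi * C x / S x) has_real_derivative
      ((- pi) * (- pi * S x) * S x - (- pi * C x) * (pi * C x)) / (S x * S x)) (at x)"
    using S by (intro DERIV_divide DERIV_cmult dC dS)
  also have "(- pi) * (- pi * S x) * S x - (- pi * C x) * (pi * C x) = pi ^ 2 * (S x ^ 2 + C x ^ 2)"
    by (simp add: algebra_simps power2_eq_square)
  also have "S x ^ 2 + C x ^ 2 = 1" by (simp add: S_def C_def)
  finally show "((\<lambda>x. - pi * cos (pi * x) / sin (pi * x)) has_real_derivative pi ^ 2 / sin (pi * x) ^ 2) (at x)"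
    by (simp add: S_def C_def power2_eq_square)
  have "((\<lambda>x. pi ^ 2 / S x ^ 2) has_real_derivative - 2 * pi ^ 3 * C x / S x ^ 3) (at x)"
    using S by (auto intro!: derivative_eq_intros dS simp: field_simps eval_nat_numeral)
  then show "((\<lambda>x. pi ^ 2 / sin (pi * x) ^ 2) has_real_derivative
      - 2 * pi ^ 3 * cos (pi * x) / sin (pi * x) ^ 3) (at x)"
    by (simp add: S_def C_def)
  have "((\<lambda>x. - 2 * pi ^ 3 * C x / S x ^ 3) has_real_derivative
      2 * pi ^ 4 * (S x ^ 2 + 3 * C x ^ 2) / S x ^ 4) (at x)"
    using S by (auto intro!: derivative_eq_intros dS dC simp: field_simps eval_nat_numeral)
  then show "((\<lambda>x. - 2 * pi ^ 3 * cos (pi * x) / sin (pi * x) ^ 3) has_real_derivative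
      2 * pi ^ 4 * (sin (pi * x) ^ 2 + 3 * cos (pi * x) ^ 2) / sin (pi * x) ^ 4) (at x)"
    by (simp add: S_def C_def)
qed

lemma Polygamma_3_half: "Polygamma 3 (1/2 :: real) = pi ^ 4"
proof -
  have "sin (pi * x) \<noteq> 0" if "x \<in> {0<..<1}" for x
    using sin_pi_pos[OF that] by simp
  note cot = has_real_derivative_cot_iterates[OF this]
  have P0: "Polygamma 0 x - (-1) ^ 0 * Polygamma 0 (1 - x) = - pi * cos (pi * x) / sin (pi * x)"
    if "x \<in> {0<..<1}" for x
    using Digamma_reflection_real[OF that] by simp
  have P1: "Polygamma 1 x - (-1) ^ 1 * Polygamma 1 (1 - x) = pi ^ 2 / sin (pi * x) ^ 2"
    if "x \<in> {0<..<1}" for x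
    using Polygamma_reflection_Suc[OF P0 cot(1) that] by simp
  have P2: "Polygamma 2 x - (-1) ^ 2 * Polygamma 2 (1 - x) = - 2 * pi ^ 3 * cos (pi * x) / sin (pi * x) ^ 3"
    if "x \<in> {0<..<1}" for x
    using Polygamma_reflection_Suc[OF P1 cot(2) that] by (simp add: numeral_2_eq_2)
  have "Polygamma 3 x - (-1) ^ 3 * Polygamma 3 (1 - x)
      = 2 * pi ^ 4 * (sin (pi * x) ^ 2 + 3 * cos (pi * x) ^ 2) / sin (pi * x) ^ 4"
    if "x \<in> {0<..<1}" for x
    using Polygamma_reflection_Suc[OF P2 cot(3) that] by (simp add: numeral_3_eq_3 numeral_2_eq_2)
  from this[of "1/2"] show ?thesis by simp
qed

lemma sums_inverse_odd_powers:
  assumes m: "m \<ge> 2"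
  shows "(\<lambda>n. 1 / real (2 * n + 1) ^ m) sums ((1 - 1 / 2 ^ m) * zeta m)"
proof -
  define f where "f n = 1 / real (Suc n) ^ m" for n
  have f: "f sums zeta m" unfolding f_def[abs_def] using m by (rule zeta_sums)
  have "(\<lambda>n. sum f {n * 2..<n * 2 + 2}) sums zeta m"
    using f by (rule sums_group) simp
  moreover have "sum f {n * 2..<n * 2 + 2} = 1 / real (2 * n + 1) ^ m + 1 / real (2 * n + 2) ^ m" for n
    by (simp add: f_def eval_nat_numeral algebra_simps)
  moreover have "(\<lambda>n. 1 / real (2 * n + 2) ^ m) sums (zeta m / 2 ^ m)"
  proof -
    have "1 / real (2 * n + 2) ^ m = f n / 2 ^ m" for n
      by (simp add: f_def power_mult_distrib[symmetric] algebra_simps)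
    then show ?thesis using sums_divide[OF f, of "2 ^ m"] by simp
  qed
  ultimately have "(\<lambda>n. (1 / real (2 * n + 1) ^ m + 1 / real (2 * n + 2) ^ m) - 1 / real (2 * n + 2) ^ m)
      sums (zeta m - zeta m / 2 ^ m)"
    by (intro sums_diff) simp_all
  then show ?thesis by (simp add: algebra_simps)
qed

lemma zeta_4: "zeta 4 = pi ^ 4 / 90"
proof -
  have "(\<lambda>k. inverse ((1/2 + real k) ^ Suc 3)) sums ((-1) ^ Suc 3 * Polygamma 3 (1/2 :: real) / fact 3)"
    by (intro Polygamma_LIMSEQ) auto
  then have "(\<lambda>k. 16 * (1 / real (2 * k + 1) ^ 4)) sums (pi ^ 4 / 6)"
    by (simp add: Polygamma_3_half fact_numeral power_divide field_simps)
  moreover have "(\<lambda>k. 16 * (1 / real (2 * k + 1) ^ 4)) sums (16 * ((1 - 1 / 2 ^ 4) * zeta 4))"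
    by (intro sums_mult sums_inverse_odd_powers) simp
  ultimately have "pi ^ 4 / 6 = 16 * ((1 - 1 / 2 ^ 4) * zeta 4)"
    by (rule sums_unique2)
  then show ?thesis by simp
qed

lemma mahler_psi_0_values:
  "mahler_psi 1 0 = of_real ((zeta 2 - 1) / 2)"
  "mahler_psi 2 0 = of_real (- 3 / 2 * (zeta 3 - 1))"
  "mahler_psi 3 0 = of_real (21 / 4 * (zeta 4 - 1))"
  "mahler_psi 4 0 = of_real (- 45 / 2 * (zeta 5 - 1))"
  by (simp_all only: mahler_psi_0_eq_zeta[OF order_refl, unfolded Suc_1]
      mahler_psi_0_eq_zeta[OF one_le_numeral] of_real_eq_iff)
    (simp_all add: fact_numeral power_divide field_simps)

lemma mD_values:
  "mD 1 = 0"
  "mD 2 = (zeta 2 - 1) / 2"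
  "mD 3 = - 3 / 2 * (zeta 3 - 1)"
  "mD 4 = 21 / 4 * (zeta 4 - 1) + 3 * ((zeta 2 - 1) / 2) ^ 2"
  "mD 5 = - 45 / 2 * (zeta 5 - 1) + 10 * ((zeta 2 - 1) / 2) * (- 3 / 2 * (zeta 3 - 1))"
proof -
  have of_real_mD: "complex_of_real (mD n) = complex_of_real r \<Longrightarrow> mD n = r" for n r
    by (simp only: of_real_eq_iff)
  note D = mD_eq_higher_deriv_mahler_gf higher_deriv_mahler_gf_0 mahler_psi_0_values
  show "mD 1 = 0"
    by (rule of_real_mD) (simp add: D)
  show "mD 2 = (zeta 2 - 1) / 2"
    by (rule of_real_mD) (simp only: D of_real_add of_real_mult of_real_power of_real_numeral)
  show "mD 3 = - 3 / 2 * (zeta 3 - 1)"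
    by (rule of_real_mD) (simp only: D of_real_add of_real_mult of_real_power of_real_numeral)
  show "mD 4 = 21 / 4 * (zeta 4 - 1) + 3 * ((zeta 2 - 1) / 2) ^ 2"
    by (rule of_real_mD) (simp only: D of_real_add of_real_mult of_real_power of_real_numeral)
  show "mD 5 = - 45 / 2 * (zeta 5 - 1) + 10 * ((zeta 2 - 1) / 2) * (- 3 / 2 * (zeta 3 - 1))"
    by (rule of_real_mD) (simp only: D of_real_add of_real_mult of_real_power of_real_numeral)
qed

theorem mainTheorem11:
  shows "mD 1 = 0 \<and>
         mD 2 = (zeta 2 - 1) / 2 \<and>
         mD 3 = - (3 * (zeta 3 - 1) / 2) \<and>
         mD 4 = 3 * (19 * zeta 4 - 4 * zeta 2 - 12) / 8 \<and>
         mD 5 = - (15 * (3 * zeta 5 + zeta 3 * zeta 2 - zeta 3 - zeta 2 - 2) / 2)"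
proof (intro conjI)
  show "mD 1 = 0" "mD 2 = (zeta 2 - 1) / 2" by (fact mD_values(1), fact mD_values(2))
  show "mD 3 = - (3 * (zeta 3 - 1) / 2)" unfolding mD_values by simp
  have "zeta 2 ^ 2 = 5 / 2 * zeta 4"
    by (simp add: zeta_2 zeta_4 power_divide)
  then show "mD 4 = 3 * (19 * zeta 4 - 4 * zeta 2 - 12) / 8"
    unfolding mD_values power_divide power2_diff by (simp add: field_simps)
  show "mD 5 = - (15 * (3 * zeta 5 + zeta 3 * zeta 2 - zeta 3 - zeta 2 - 2) / 2)"
    unfolding mD_values by (simp add: field_simps)
qed

end
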